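(* For every $n\ge 1$, the burning number of the directed path $P_n$ on $n$ nodes is $\left\lceil \sqrt{2n+\tfrac14}-\tfrac12\right\rceil$.
   Context: Burning process on a digraph $D$: a sequence $(x_1,\ldots,x_b)$ of nodes is a burning sequence for $D$ if after $b$ steps of the following process every node of $D$ is burned; the $i$-th step consists of first burning all out-neighbours of all currently burned nodes, and then burning the node $x_i$. The burning number of $D$ is the length of a shortest burning sequence. Equivalently, with $N^+_k(v)$ the set of nodes reachable from $v$ by a directed path with at most $k$ arcs, the burning number is the least $b$ such that there are nodes $v_1,\ldots,v_b$ with $V(D)=\bigcup_{i=1}^b N^+_{i-1}(v_i)$. *)

theory Defs
  imports Complex_Main
begin

definition out_ball :: "('a \<times> 'a) set \<Rightarrow> nat \<Rightarrow> 'a \<Rightarrow> 'a set" where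
  "out_ball A k v = {w. \<exists>j\<le>k. (v, w) \<in> A ^^ j}"

definition is_burning_seq :: "'a set \<Rightarrow> ('a \<times> 'a) set \<Rightarrow> nat \<Rightarrow> (nat \<Rightarrow> 'a) \<Rightarrow> bool" where
  "is_burning_seq V A b v \<longleftrightarrow>
     (\<forall>i\<in>{1..b}. v i \<in> V) \<and> V = (\<Union>i\<in>{1..b}. out_ball A (i - 1) (v i))"

definition burning_number :: "'a set \<Rightarrow> ('a \<times> 'a) set \<Rightarrow> nat" where
  "burning_number V A = (LEAST b. \<exists>v. is_burning_seq V A b v)"

definition dipath_nodes :: "nat \<Rightarrow> nat set" where
  "dipath_nodes n = {0..<n}"

definition dipath_arcs :: "nat \<Rightarrow> (nat \<times> nat) set" where
  "dipath_arcs n = {(i, i + 1) | i. i + 1 < n}"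

end

theory Submission
  imports Defs
begin

text \<open>
  A ball of radius \<open>k\<close> in the directed path is an interval of at most \<open>k + 1\<close> consecutive
  nodes, so \<open>b\<close> fires cover at most \<open>1 + 2 + \<dots> + b = b (b + 1) / 2\<close> nodes; conversely,
  laying the intervals of lengths \<open>1, 2, \<dots>, b\<close> end to end covers \<open>P\<^sub>n\<close> whenever
  \<open>2 n \<le> b (b + 1)\<close>. Hence the burning number is the least \<open>b\<close> with \<open>2 n \<le> b (b + 1)\<close>, and
  solving this quadratic inequality gives the ceiling formula.
\<close>

lemma relpow_dipath_arcs_iff:
  "(v, w) \<in> dipath_arcs n ^^ j \<longleftrightarrow> w = v + j \<and> (j = 0 \<or> w < n)"
proof (induction j arbitrary: w)
  case 0
  then show ?case by auto
next
  case (Suc j)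
  show ?case
  proof
    assume "(v, w) \<in> dipath_arcs n ^^ Suc j"
    then obtain u where "(v, u) \<in> dipath_arcs n ^^ j" "(u, w) \<in> dipath_arcs n"
      by auto
    then show "w = v + Suc j \<and> (Suc j = 0 \<or> w < n)"
      using Suc.IH by (auto simp: dipath_arcs_def)
  next
    assume "w = v + Suc j \<and> (Suc j = 0 \<or> w < n)"
    then have "(v, v + j) \<in> dipath_arcs n ^^ j" "(v + j, w) \<in> dipath_arcs n"
      using Suc.IH by (auto simp: dipath_arcs_def)
    then show "(v, w) \<in> dipath_arcs n ^^ Suc j"
      by auto
  qed
qed

lemma out_ball_dipath:
  assumes "v < n"
  shows "out_ball (dipath_arcs n) k v = {v..<min (v + k + 1) n}"
proof -
  have "w \<in> out_ball (dipath_arcs n) k v \<longleftrightarrow> (\<exists>j\<le>k. w = v + j \<and> (j = 0 \<or> w < n))" for w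
    unfolding out_ball_def relpow_dipath_arcs_iff by simp
  also have "(\<exists>j\<le>k. w = v + j \<and> (j = 0 \<or> w < n)) \<longleftrightarrow> v \<le> w \<and> w \<le> v + k \<and> w < n" for w
  proof
    assume "\<exists>j\<le>k. w = v + j \<and> (j = 0 \<or> w < n)"
    with assms show "v \<le> w \<and> w \<le> v + k \<and> w < n"
      by auto
  next
    assume "v \<le> w \<and> w \<le> v + k \<and> w < n"
    then show "\<exists>j\<le>k. w = v + j \<and> (j = 0 \<or> w < n)"
      by (intro exI[of _ "w - v"]) auto
  qed
  finally show ?thesis
    by (simp add: set_eq_iff less_Suc_eq_le)
qed

lemma card_out_ball_dipath_le: "v < n \<Longrightarrow> card (out_ball (dipath_arcs n) k v) \<le> Suc k"
  by (simp add: out_ball_dipath)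

lemma burning_seq_card_le:
  assumes burns: "is_burning_seq V A b v"
    and small_balls: "\<And>k u. u \<in> V \<Longrightarrow> card (out_ball A k u) \<le> Suc k"
  shows "2 * card V \<le> b * (b + 1)"
proof -
  have cover: "V = (\<Union>i\<in>{1..b}. out_ball A (i - 1) (v i))"
    using burns unfolding is_burning_seq_def by blast
  have "card V \<le> (\<Sum>i\<in>{1..b}. card (out_ball A (i - 1) (v i)))"
    unfolding cover by (rule card_UN_le) simp
  also have "\<dots> \<le> (\<Sum>i\<in>{1..b}. i)"
  proof (rule sum_mono)
    fix i
    assume i: "i \<in> {1..b}"
    with burns have "v i \<in> V"
      unfolding is_burning_seq_def by blast
    then have "card (out_ball A (i - 1) (v i)) \<le> Suc (i - 1)"
      by (rule small_balls)
    with i show "card (out_ball A (i - 1) (v i)) \<le> i"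
      by simp
  qed
  finally have "2 * card V \<le> 2 * (\<Sum>i\<in>{1..b}. i)"
    by simp
  also have "\<dots> = b * (b + 1)"
    using double_gauss_sum_from_Suc_0[of b, where ?'a = nat] by simp
  finally show ?thesis .
qed

lemma ex_step_between:
  fixes f :: "nat \<Rightarrow> 'a::linorder"
  assumes "a \<le> b" "f a \<le> x" "x < f b"
  shows "\<exists>i. a \<le> i \<and> i < b \<and> f i \<le> x \<and> x < f (Suc i)"
  using assms
proof (induction b)
  case 0
  then show ?case by simp
next
  case (Suc b)
  then have "a \<noteq> Suc b"
    by auto
  with Suc.prems(1) have "a \<le> b"
    by simp
  show ?case
  proof (cases "x < f b")
    case True
    then obtain i where "a \<le> i" "i < b" "f i \<le> x" "x < f (Suc i)"
      using Suc.IH[OF \<open>a \<le> b\<close> Suc.prems(2)] by blast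
    then show ?thesis
      using less_SucI by blast
  next
    case False
    with \<open>a \<le> b\<close> Suc.prems(3) show ?thesis
      by (intro exI[of _ b]) simp
  qed
qed

lemma dipath_burning_seq_exists:
  assumes "1 \<le> n" "2 * n \<le> b * (b + 1)"
  shows "\<exists>v. is_burning_seq (dipath_nodes n) (dipath_arcs n) b v"
proof -
  \<comment> \<open>Fire \<open>i\<close> is lit at \<open>0 + 1 + \<dots> + (i - 1)\<close> and so burns exactly the nodes up to where fire
    \<open>i + 1\<close> is lit; fires starting beyond the path are moved onto its last node.\<close>
  let ?start = "\<lambda>i. \<Sum>j<i. j"
  define v where "v i = min (?start i) (n - 1)" for i
  have "is_burning_seq (dipath_nodes n) (dipath_arcs n) b v"
    unfolding is_burning_seq_def dipath_nodes_def
  proof (intro conjI ballI equalityI subsetI)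
    fix i
    show "v i \<in> {0..<n}"
      using assms(1) by (simp add: v_def)
  next
    fix w
    assume "w \<in> (\<Union>i\<in>{1..b}. out_ball (dipath_arcs n) (i - 1) (v i))"
    then show "w \<in> {0..<n}"
      using assms(1) by (auto simp: out_ball_dipath v_def)
  next
    fix w
    assume w: "w \<in> {0..<n}"
    have "2 * ?start (Suc b) = b * (b + 1)"
      using double_gauss_sum[of b, where ?'a = nat] by (simp add: lessThan_Suc_atMost atLeast0AtMost)
    with w assms(2) have "w < ?start (Suc b)"
      by simp
    then obtain i where i: "1 \<le> i" "i < Suc b" "?start i \<le> w" "w < ?start (Suc i)"
      using ex_step_between[of 1 "Suc b" ?start w] by auto
    with w have "w \<in> out_ball (dipath_arcs n) (i - 1) (v i)"
      by (auto simp: out_ball_dipath v_def)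
    with i show "w \<in> (\<Union>i\<in>{1..b}. out_ball (dipath_arcs n) (i - 1) (v i))"
      by auto
  qed
  then show ?thesis
    by blast
qed

lemma burning_number_dipath:
  assumes "1 \<le> n" "(b - 1) * b < 2 * n" "2 * n \<le> b * (b + 1)"
  shows "burning_number (dipath_nodes n) (dipath_arcs n) = b"
  unfolding burning_number_def
proof (rule Least_equality)
  show "\<exists>v. is_burning_seq (dipath_nodes n) (dipath_arcs n) b v"
    using assms(1,3) by (rule dipath_burning_seq_exists)
next
  fix m
  assume "\<exists>v. is_burning_seq (dipath_nodes n) (dipath_arcs n) m v"
  then obtain v where "is_burning_seq (dipath_nodes n) (dipath_arcs n) m v" ..
  then have "2 * card (dipath_nodes n) \<le> m * (m + 1)"
    by (rule burning_seq_card_le) (simp add: dipath_nodes_def card_out_ball_dipath_le)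
  then have "2 * n \<le> m * (m + 1)"
    by (simp add: dipath_nodes_def)
  show "b \<le> m"
  proof (rule ccontr)
    assume "\<not> b \<le> m"
    then have "m * (m + 1) \<le> (b - 1) * b"
      by (intro mult_le_mono) auto
    with assms(2) \<open>2 * n \<le> m * (m + 1)\<close> show False
      by linarith
  qed
qed

lemma ex_triangular_bracket:
  assumes "0 < (n::nat)"
  shows "\<exists>b. (b - 1) * b < n \<and> n \<le> b * (b + 1)"
proof -
  define b where "b = (LEAST b. n \<le> b * (b + 1))"
  have "n \<le> n * (n + 1)"
    by simp
  then have upper: "n \<le> b * (b + 1)"
    unfolding b_def by (rule LeastI)
  with assms have "0 < b"
    by (cases b) auto
  then have "\<not> n \<le> (b - 1) * (b - 1 + 1)"
    unfolding b_def by (intro not_less_Least) (simp add: b_def)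
  with \<open>0 < b\<close> have "(b - 1) * b < n"
    by simp
  with upper show ?thesis
    by blast
qed

lemma ceiling_sqrt_eq_of_triangular_bracket:
  fixes b m :: nat
  assumes "(b - 1) * b < m" "m \<le> b * (b + 1)"
  shows "\<lceil>sqrt (real m + 1/4) - 1/2\<rceil> = int b"
proof (rule ceiling_unique)
  have "real ((b - 1) * b) = (real b - 1) * real b"
    by (cases b) (auto simp: algebra_simps)
  with assms(1) have "(real b - 1) * real b < real m"
    by (metis of_nat_less_iff)
  then have "real b - 1/2 < sqrt (real m + 1/4)"
    by (intro real_less_rsqrt) (simp add: algebra_simps power2_eq_square)
  then show "real_of_int (int b) - 1 < sqrt (real m + 1/4) - 1/2"
    by simp
  have "real m \<le> real b * (real b + 1)"
    using of_nat_mono[OF assms(2), where ?'a = real] by (simp add: algebra_simps)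
  then show "sqrt (real m + 1/4) - 1/2 \<le> real_of_int (int b)"
    by (simp add: real_le_lsqrt algebra_simps power2_eq_square)
qed

theorem mainTheorem3:
  fixes n :: nat
  assumes "n \<ge> 1"
  shows "int (burning_number (dipath_nodes n) (dipath_arcs n))
           = \<lceil>sqrt (2 * real n + 1/4) - 1/2\<rceil>"
proof -
  obtain b where b: "(b - 1) * b < 2 * n" "2 * n \<le> b * (b + 1)"
    using ex_triangular_bracket[of "2 * n"] assms by auto
  have "burning_number (dipath_nodes n) (dipath_arcs n) = b"
    using assms b by (rule burning_number_dipath)
  moreover have "\<lceil>sqrt (real (2 * n) + 1/4) - 1/2\<rceil> = int b"
    using b by (rule ceiling_sqrt_eq_of_triangular_bracket)
  ultimately show ?thesis
    by simp
qed

end
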